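(* Let $S_1=(x_1,y_1),\ldots,S_4=(x_4,y_4)$ be four points in the plane with $x_1\le x_2\le x_3\le x_4$, and let $\delta_1,\ldots,\delta_4$ be positive integers. For $i\in\{1,\dots,4\}$ define the pivot point $$P_i=\left(x_i+\frac{\sum_{j=1}^4\delta_j(x_j-x_i)^2}{\sum_{j=1}^4\delta_j(x_j-x_i)},\ y_i+\frac{\sum_{j=1}^4\delta_j(x_j-x_i)(y_j-y_i)}{\sum_{j=1}^4\delta_j(x_j-x_i)}\right)$$ whenever the denominator is nonzero. Fix $i$ such that $P_i$ is defined and the three points $S_a,S_b,S_c$ ($a<b<c$, $\{a,b,c\}=\{1,2,3,4\}\setminus\{i\}$) are not collinear, and let $(\lambda_a,\lambda_b,\lambda_c)$ be the barycentric coordinates of $P_i$ with respect to the triangle $S_aS_bS_c$. Then the sign pattern of $(\lambda_a,\lambda_b,\lambda_c)$ is neither $+-+$ (i.e. $\lambda_a>0,\lambda_b<0,\lambda_c>0$) nor $-+-$ (i.e. $\lambda_a<0,\lambda_b>0,\lambda_c<0$).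
   Context: The pivot point $P_i$ is the point through which the least-squares regression line of the data, in which each $S_j$ appears $\delta_j$ times, always passes regardless of how many additional copies of $S_i$ are added. For a non-degenerate triangle $ABC$, the barycentric coordinates of $Q$ are the unique reals $(\lambda_A,\lambda_B,\lambda_C)$ with sum $1$ and $Q=\lambda_AA+\lambda_BB+\lambda_CC$; their sign pattern determines which of the seven regions cut out by the edge-lines of the triangle contains $Q$. *)

theory Defs
  imports "HOL-Analysis.Analysis"
begin

definition pivot_den :: "(nat \<Rightarrow> real) \<Rightarrow> (nat \<Rightarrow> nat) \<Rightarrow> nat \<Rightarrow> real" where
  "pivot_den x \<delta> i = (\<Sum>j=1..4. real (\<delta> j) * (x j - x i))"

definition pivot :: "(nat \<Rightarrow> real) \<Rightarrow> (nat \<Rightarrow> real) \<Rightarrow> (nat \<Rightarrow> nat) \<Rightarrow> nat \<Rightarrow> real \<times> real" where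
  "pivot x y \<delta> i =
     (x i + (\<Sum>j=1..4. real (\<delta> j) * (x j - x i)^2) / pivot_den x \<delta> i,
      y i + (\<Sum>j=1..4. real (\<delta> j) * (x j - x i) * (y j - y i)) / pivot_den x \<delta> i)"

definition collinear3 :: "real \<times> real \<Rightarrow> real \<times> real \<Rightarrow> real \<times> real \<Rightarrow> bool" where
  "collinear3 A B C \<longleftrightarrow>
     (fst B - fst A) * (snd C - snd A) - (snd B - snd A) * (fst C - fst A) = 0"

definition barycentric ::
  "real \<times> real \<Rightarrow> real \<times> real \<Rightarrow> real \<times> real \<Rightarrow> real \<times> real \<Rightarrow> real \<times> real \<times> real" where
  "barycentric A B C Q = (THE (la, lb, lc). la + lb + lc = 1 \<and>
      Q = la *\<^sub>R A + lb *\<^sub>R B + lc *\<^sub>R C)"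

end

theory Submission
  imports Defs
begin

text \<open>Writing \<open>D\<close> for the denominator, the pivot point is the affine combination
  \<open>\<Sum>j. (\<delta>\<^sub>j (x\<^sub>j - x\<^sub>i) / D) S\<^sub>j\<close>, in which \<open>S\<^sub>i\<close> has weight \<open>0\<close>. Hence the barycentric
  coordinates of \<open>P\<^sub>i\<close> with respect to the other three points are exactly these weights, and
  \<open>\<lambda>\<^sub>j D = \<delta>\<^sub>j (x\<^sub>j - x\<^sub>i)\<close>. An alternating sign pattern would force \<open>x\<^sub>i\<close> strictly between
  \<open>x\<^sub>a\<close> and \<open>x\<^sub>b\<close> and also strictly between \<open>x\<^sub>b\<close> and \<open>x\<^sub>c\<close>, which contradicts
  \<open>x\<^sub>a \<le> x\<^sub>b \<le> x\<^sub>c\<close>.\<close>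

lemma homogeneous_2x2_unique:
  fixes u1 u2 v1 v2 p r :: real
  assumes det: "u1 * v2 - u2 * v1 \<noteq> 0"
    and eq1: "p * u1 + r * v1 = 0" and eq2: "p * u2 + r * v2 = 0"
  shows "p = 0 \<and> r = 0"
proof -
  have "p * (u1 * v2 - u2 * v1) = v2 * (p * u1 + r * v1) - v1 * (p * u2 + r * v2)"
    "r * (u1 * v2 - u2 * v1) = u1 * (p * u2 + r * v2) - u2 * (p * u1 + r * v1)"
    by (simp_all add: algebra_simps)
  then have "p * (u1 * v2 - u2 * v1) = 0" "r * (u1 * v2 - u2 * v1) = 0"
    by (simp_all only: eq1 eq2 mult_zero_right diff_zero)
  with det show ?thesis by simp
qed

lemma barycentric_eqI:
  assumes "\<not> collinear3 A B C"
    and "la + lb + lc = 1" and "Q = la *\<^sub>R A + lb *\<^sub>R B + lc *\<^sub>R C"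
  shows "barycentric A B C Q = (la, lb, lc)"
  unfolding barycentric_def
proof (rule the_equality)
  show "case (la, lb, lc) of (la, lb, lc) \<Rightarrow>
      la + lb + lc = 1 \<and> Q = la *\<^sub>R A + lb *\<^sub>R B + lc *\<^sub>R C"
    using assms(2,3) by simp
next
  fix t :: "real \<times> real \<times> real"
  assume "case t of (la, lb, lc) \<Rightarrow> la + lb + lc = 1 \<and> Q = la *\<^sub>R A + lb *\<^sub>R B + lc *\<^sub>R C"
  then obtain ma mb mc where t: "t = (ma, mb, mc)" and "ma + mb + mc = 1"
    and "Q = ma *\<^sub>R A + mb *\<^sub>R B + mc *\<^sub>R C"
    by (cases t) auto
  with assms(2) have ma: "ma = la - (mb - lb) - (mc - lc)"
    by linarith
  have "(mb - lb) *\<^sub>R (B - A) + (mc - lc) *\<^sub>R (C - A)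
      = (ma *\<^sub>R A + mb *\<^sub>R B + mc *\<^sub>R C) - (la *\<^sub>R A + lb *\<^sub>R B + lc *\<^sub>R C)"
    unfolding ma by (simp add: algebra_simps)
  also have "\<dots> = 0"
    using \<open>Q = ma *\<^sub>R A + mb *\<^sub>R B + mc *\<^sub>R C\<close> assms(3) by simp
  finally have diff: "(mb - lb) *\<^sub>R (B - A) + (mc - lc) *\<^sub>R (C - A) = 0" .
  have "(fst B - fst A) * (snd C - snd A) - (snd B - snd A) * (fst C - fst A) \<noteq> 0"
    using assms(1) unfolding collinear3_def .
  moreover have "(mb - lb) * (fst B - fst A) + (mc - lc) * (fst C - fst A) = 0"
    and "(mb - lb) * (snd B - snd A) + (mc - lc) * (snd C - snd A) = 0"
    using arg_cong[OF diff, of fst] arg_cong[OF diff, of snd] by simp_all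
  ultimately have "mb - lb = 0 \<and> mc - lc = 0"
    by (rule homogeneous_2x2_unique)
  with t ma show "t = (la, lb, lc)" by simp
qed

lemma weighted_pivot_as_affine_combination:
  fixes x u w :: "'a \<Rightarrow> real"
  assumes "finite J" and D: "D = (\<Sum>j\<in>J. w j * (x j - x i))" "D \<noteq> 0"
  shows "u i + (\<Sum>j\<in>J. w j * (x j - x i) * (u j - u i)) / D
       = (\<Sum>j\<in>J. w j * (x j - x i) / D * u j)"
proof -
  have "(\<Sum>j\<in>J. w j * (x j - x i) * (u j - u i))
      = (\<Sum>j\<in>J. w j * (x j - x i) * u j - w j * (x j - x i) * u i)"
    by (simp add: algebra_simps)
  also have "\<dots> = (\<Sum>j\<in>J. w j * (x j - x i) * u j) - D * u i"
    by (simp add: sum_subtractf D(1) sum_distrib_right)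
  finally have "(\<Sum>j\<in>J. w j * (x j - x i) * (u j - u i))
      = (\<Sum>j\<in>J. w j * (x j - x i) * u j) - D * u i" .
  moreover have "(\<Sum>j\<in>J. w j * (x j - x i) / D * u j) = (\<Sum>j\<in>J. w j * (x j - x i) * u j) / D"
    by (simp add: sum_divide_distrib)
  ultimately show ?thesis
    using D(2) by (simp add: diff_divide_distrib)
qed

definition pivot_weight :: "(nat \<Rightarrow> real) \<Rightarrow> (nat \<Rightarrow> nat) \<Rightarrow> nat \<Rightarrow> nat \<Rightarrow> real" where
  "pivot_weight x \<delta> i j = real (\<delta> j) * (x j - x i) / pivot_den x \<delta> i"

lemma pivot_eq_affine_combination:
  assumes "pivot_den x \<delta> i \<noteq> 0"
  shows "pivot x y \<delta> i = (\<Sum>j=1..4. pivot_weight x \<delta> i j *\<^sub>R (x j, y j))"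
proof -
  have "pivot_den x \<delta> i = (\<Sum>j=1..4. real (\<delta> j) * (x j - x i))"
    unfolding pivot_den_def ..
  note affine = weighted_pivot_as_affine_combination[OF finite_atLeastAtMost this assms]
  have "fst (pivot x y \<delta> i) = (\<Sum>j=1..4. pivot_weight x \<delta> i j * x j)"
    using affine[of x] unfolding pivot_def pivot_weight_def power2_eq_square mult.assoc fst_conv .
  moreover have "snd (pivot x y \<delta> i) = (\<Sum>j=1..4. pivot_weight x \<delta> i j * y j)"
    using affine[of y] unfolding pivot_def pivot_weight_def mult.assoc snd_conv .
  ultimately show ?thesis
    by (simp add: prod_eq_iff fst_sum snd_sum)
qed

lemma sum_pivot_weight: "pivot_den x \<delta> i \<noteq> 0 \<Longrightarrow> (\<Sum>j=1..4. pivot_weight x \<delta> i j) = 1"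
  by (simp add: pivot_weight_def pivot_den_def flip: sum_divide_distrib)

lemma pivot_weight_self [simp]: "pivot_weight x \<delta> i i = 0"
  by (simp add: pivot_weight_def)

lemma sum_1_4_remove:
  fixes f :: "nat \<Rightarrow> 'b::comm_monoid_add"
  assumes "i \<in> {1..4}" "a < b" "b < c" "{a, b, c} = {1..4} - {i}"
  shows "(\<Sum>j=1..4. f j) = f i + f a + f b + f c"
proof -
  have "{1..4} = insert i {a, b, c}"
    unfolding assms(4) using assms(1) by (rule insert_Diff[symmetric])
  moreover have "i \<notin> {a, b, c}"
    unfolding assms(4) by simp
  ultimately show ?thesis
    using assms(2,3) by (simp add: add.assoc)
qed

lemma barycentric_pivot:
  assumes "i \<in> {1..4}" "pivot_den x \<delta> i \<noteq> 0"
    and "a < b" "b < c" "{a, b, c} = {1..4} - {i}"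
    and "\<not> collinear3 (x a, y a) (x b, y b) (x c, y c)"
  shows "barycentric (x a, y a) (x b, y b) (x c, y c) (pivot x y \<delta> i)
       = (pivot_weight x \<delta> i a, pivot_weight x \<delta> i b, pivot_weight x \<delta> i c)"
proof (rule barycentric_eqI[OF assms(6)])
  note sum_abc = sum_1_4_remove[OF assms(1,3-5)]
  show "pivot_weight x \<delta> i a + pivot_weight x \<delta> i b + pivot_weight x \<delta> i c = 1"
    using sum_pivot_weight[OF assms(2), unfolded sum_abc] by simp
  show "pivot x y \<delta> i = pivot_weight x \<delta> i a *\<^sub>R (x a, y a)
      + pivot_weight x \<delta> i b *\<^sub>R (x b, y b) + pivot_weight x \<delta> i c *\<^sub>R (x c, y c)"
    using pivot_eq_affine_combination[OF assms(2), unfolded sum_abc] by simp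
qed

lemma pivot_weight_mult_den:
  "pivot_den x \<delta> i \<noteq> 0 \<Longrightarrow> pivot_weight x \<delta> i j * pivot_den x \<delta> i = real (\<delta> j) * (x j - x i)"
  by (simp add: pivot_weight_def)

lemma opposite_signs_transfer:
  fixes l l' D d d' u u' :: real
  assumes "D \<noteq> 0" "d > 0" "d' > 0" "l * D = d * u" "l' * D = d' * u'" "l * l' < 0"
  shows "u * u' < 0"
proof -
  have "(d * d') * (u * u') = (l * l') * (D * D)"
    using assms(4,5) by (metis mult.assoc mult.commute mult.left_commute)
  also have "\<dots> < 0"
  proof (rule mult_neg_pos[OF assms(6)])
    show "0 < D * D"
      using assms(1) by (metis not_real_square_gt_zero)
  qed
  finally show ?thesis
    using assms(2,3) by (simp add: zero_less_mult_iff mult_less_0_iff)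
qed

lemma between_if_opposite_signs:
  fixes s t u :: real
  assumes "s \<le> u" "(s - t) * (u - t) < 0"
  shows "s < t \<and> t < u"
  using assms by (auto simp: mult_less_0_iff)

lemma no_alternating_sign_pattern:
  fixes D t xa xb xc da db dc la lb lc :: real
  assumes "xa \<le> xb" "xb \<le> xc" "D \<noteq> 0" "da > 0" "db > 0" "dc > 0"
    and "la * D = da * (xa - t)" "lb * D = db * (xb - t)" "lc * D = dc * (xc - t)"
  shows "\<not> (la * lb < 0 \<and> lb * lc < 0)"
proof
  assume "la * lb < 0 \<and> lb * lc < 0"
  then have "(xa - t) * (xb - t) < 0" "(xb - t) * (xc - t) < 0"
    using opposite_signs_transfer[OF assms(3,4,5,7,8)]
      opposite_signs_transfer[OF assms(3,5,6,8,9)] by simp_all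
  with assms(1,2) have "t < xb" "xb < t"
    using between_if_opposite_signs by blast+
  then show False by simp
qed

lemma chain_1_4_mono:
  fixes x :: "nat \<Rightarrow> real"
  assumes "x 1 \<le> x 2" "x 2 \<le> x 3" "x 3 \<le> x 4" "j \<in> {1..4}" "k \<in> {1..4}" "j \<le> k"
  shows "x j \<le> x k"
proof -
  have "j \<in> {1, 2, 3, 4}" "k \<in> {1, 2, 3, 4}"
    using assms(4,5) by auto
  with assms(1-3,6) show ?thesis by auto
qed

theorem corollary1:
  fixes x y :: "nat \<Rightarrow> real" and \<delta> :: "nat \<Rightarrow> nat" and i a b c :: nat
    and la lb lc :: real
  assumes "x 1 \<le> x 2" "x 2 \<le> x 3" "x 3 \<le> x 4"
    and "\<forall>j\<in>{1..4}. \<delta> j > 0"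
    and "i \<in> {1..4}"
    and "pivot_den x \<delta> i \<noteq> 0"
    and "a < b" "b < c" "{a, b, c} = {1..4} - {i}"
    and "\<not> collinear3 (x a, y a) (x b, y b) (x c, y c)"
    and "barycentric (x a, y a) (x b, y b) (x c, y c) (pivot x y \<delta> i) = (la, lb, lc)"
  shows "\<not> (la > 0 \<and> lb < 0 \<and> lc > 0) \<and> \<not> (la < 0 \<and> lb > 0 \<and> lc < 0)"
proof -
  have "{a, b, c} \<subseteq> {1..4}"
    unfolding assms(9) by (rule Diff_subset)
  then have abc: "a \<in> {1..4}" "b \<in> {1..4}" "c \<in> {1..4}"
    by simp_all
  have weights: "la = pivot_weight x \<delta> i a" "lb = pivot_weight x \<delta> i b" "lc = pivot_weight x \<delta> i c"
    using assms(11) barycentric_pivot[OF assms(5-10)] by simp_all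
  have "\<not> (la * lb < 0 \<and> lb * lc < 0)"
  proof (rule no_alternating_sign_pattern)
    show "x a \<le> x b" "x b \<le> x c"
      using chain_1_4_mono[OF assms(1-3)] abc assms(7,8) by simp_all
    show "real (\<delta> a) > 0" "real (\<delta> b) > 0" "real (\<delta> c) > 0"
      using assms(4) abc by simp_all
    show "la * pivot_den x \<delta> i = real (\<delta> a) * (x a - x i)"
      "lb * pivot_den x \<delta> i = real (\<delta> b) * (x b - x i)"
      "lc * pivot_den x \<delta> i = real (\<delta> c) * (x c - x i)"
      unfolding weights using pivot_weight_mult_den[OF assms(6)] by simp_all
  qed (rule assms(6))
  then show ?thesis
    by (meson mult_pos_neg mult_neg_pos)
qed

end
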